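(* Let $Q\subset\mathbb{R}^2$ be a convex polygon with $n\ge 4$ vertices, no four of which lie on a common circle. Consider all circles passing through three vertices of $Q$. Let $s_+,t_+,u_+$ be the numbers of full circles that are neighboring, disjoint and intermediate, respectively, and let $s_-,t_-,u_-$ be the numbers of empty circles that are neighboring, disjoint and intermediate, respectively. Then $$s_+-t_+=s_--t_-=2,\qquad s_++t_++u_+=s_-+t_-+u_-=n-2.$$
   Context: A circle through three vertices of $Q$ is called empty if all remaining vertices of $Q$ lie strictly outside it, and full if all remaining vertices of $Q$ lie strictly inside it. Such a circle is called neighboring if its three vertices are consecutive vertices of $Q$; disjoint if no two of its three vertices are adjacent vertices of $Q$; and intermediate in all other cases. *)

theory Defs
  imports "HOL-Analysis.Analysis"
begin

text \<open>Points of the plane are pairs of reals (Euclidean metric via dist).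
  A polygon with n vertices is given by p 0, ..., p (n-1), listed in cyclic
  boundary order; indices are taken modulo n.\<close>

definition orient :: "real \<times> real \<Rightarrow> real \<times> real \<Rightarrow> real \<times> real \<Rightarrow> real" where
  "orient a b c = (fst b - fst a) * (snd c - snd a) - (snd b - snd a) * (fst c - fst a)"

definition convex_polygon :: "nat \<Rightarrow> (nat \<Rightarrow> real \<times> real) \<Rightarrow> bool" where
  "convex_polygon n p \<longleftrightarrow> n \<ge> 3 \<and>
     ((\<forall>i<n. \<forall>j<n. j \<noteq> i \<and> j \<noteq> Suc i mod n \<longrightarrow> orient (p i) (p (Suc i mod n)) (p j) > 0) \<or>
      (\<forall>i<n. \<forall>j<n. j \<noteq> i \<and> j \<noteq> Suc i mod n \<longrightarrow> orient (p i) (p (Suc i mod n)) (p j) < 0))"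

definition on_common_circle :: "(real \<times> real) set \<Rightarrow> bool" where
  "on_common_circle S \<longleftrightarrow> (\<exists>c r. r > 0 \<and> (\<forall>x\<in>S. dist c x = r))"

definition no_four_concyclic :: "nat \<Rightarrow> (nat \<Rightarrow> real \<times> real) \<Rightarrow> bool" where
  "no_four_concyclic n p \<longleftrightarrow>
     (\<forall>i j k l. i < n \<and> j < n \<and> k < n \<and> l < n \<and> distinct [i, j, k, l] \<longrightarrow>
        \<not> on_common_circle {p i, p j, p k, p l})"

text \<open>Triples of vertex indices (3-element subsets of {0..<n}); each determines
  exactly one circle through three vertices, and distinct triples give distinct
  circles because no four vertices are concyclic.\<close>
definition triples :: "nat \<Rightarrow> nat set set" where
  "triples n = {T. T \<subseteq> {0..<n} \<and> card T = 3}"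

definition full_circle :: "nat \<Rightarrow> (nat \<Rightarrow> real \<times> real) \<Rightarrow> nat set \<Rightarrow> bool" where
  "full_circle n p T \<longleftrightarrow> (\<exists>c r. (\<forall>i\<in>T. dist c (p i) = r) \<and>
      (\<forall>m\<in>{0..<n} - T. dist c (p m) < r))"

definition empty_circle :: "nat \<Rightarrow> (nat \<Rightarrow> real \<times> real) \<Rightarrow> nat set \<Rightarrow> bool" where
  "empty_circle n p T \<longleftrightarrow> (\<exists>c r. (\<forall>i\<in>T. dist c (p i) = r) \<and>
      (\<forall>m\<in>{0..<n} - T. dist c (p m) > r))"

definition adjacent :: "nat \<Rightarrow> nat \<Rightarrow> nat \<Rightarrow> bool" where
  "adjacent n i j \<longleftrightarrow> j = Suc i mod n \<or> i = Suc j mod n"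

definition neighboring :: "nat \<Rightarrow> nat set \<Rightarrow> bool" where
  "neighboring n T \<longleftrightarrow> (\<exists>i<n. T = {i, Suc i mod n, Suc (Suc i) mod n})"

definition disjoint_triple :: "nat \<Rightarrow> nat set \<Rightarrow> bool" where
  "disjoint_triple n T \<longleftrightarrow> (\<forall>i\<in>T. \<forall>j\<in>T. \<not> adjacent n i j)"

definition intermediate :: "nat \<Rightarrow> nat set \<Rightarrow> bool" where
  "intermediate n T \<longleftrightarrow> \<not> neighboring n T \<and> \<not> disjoint_triple n T"

end

theory Submission
  imports Defs
begin

text \<open>Lift the vertices to the paraboloid z = x^2 + y^2. A circle through three vertices is empty
  (full) exactly when the plane through the three lifted vertices passes below (above) all other
  lifted vertices, so empty and full circles are the faces of the lower and of the upper convex hull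
  of the lifted polygon. As the vertices are in convex position and no four lifted vertices are
  coplanar, each hull projects to a triangulation of Q: it has n - 2 faces, and every edge of Q is a
  side of exactly one of them. A neighboring triangle has two sides on the boundary of Q, an
  intermediate one has one and a disjoint one none, so 2 s + u = n, and with s + t + u = n - 2 this
  gives s - t = 2.\<close>

definition cyclic_order :: "nat \<Rightarrow> nat \<Rightarrow> nat \<Rightarrow> bool" where
  "cyclic_order x y w \<longleftrightarrow> (x < y \<and> y < w) \<or> (y < w \<and> w < x) \<or> (w < x \<and> x < y)"

lemma cyclic_order_swap: "distinct [x, y, w] \<Longrightarrow> cyclic_order x w y \<longleftrightarrow> \<not> cyclic_order x y w"
  by (simp add: cyclic_order_def) presburger

lemma cyclic_order_crossing:
  "distinct [a, b, x, y] \<Longrightarrow> cyclic_order a b x \<Longrightarrow> \<not> cyclic_order a b y \<Longrightarrow>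
     cyclic_order b x y \<and> \<not> cyclic_order a x y"
  by (simp add: cyclic_order_def) presburger

lemma cyclic_order_separated_by_some_side:
  "distinct [a, b, c, m] \<Longrightarrow>
     cyclic_order a b m \<noteq> cyclic_order a b c \<or> cyclic_order b c m \<noteq> cyclic_order b c a \<or>
     cyclic_order c a m \<noteq> cyclic_order c a b"
  by (simp add: cyclic_order_def) presburger

lemma cyclic_order_separated_by_one_side:
  "distinct [a, b, c, m] \<Longrightarrow>
     \<not> (cyclic_order a b m \<noteq> cyclic_order a b c \<and> cyclic_order b c m \<noteq> cyclic_order b c a)"
  by (simp add: cyclic_order_def) presburger

lemma cyclic_order_polygon_edge:
  "k < n \<Longrightarrow> m < n \<Longrightarrow> m \<noteq> k \<Longrightarrow> m \<noteq> Suc k mod n \<Longrightarrow> cyclic_order k (Suc k mod n) m"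
  unfolding cyclic_order_def by (auto simp: mod_Suc)

definition plane_at :: "real \<Rightarrow> real \<Rightarrow> real \<Rightarrow> real \<times> real \<Rightarrow> real" where
  "plane_at \<alpha> \<beta> \<gamma> x = \<alpha> * fst x + \<beta> * snd x + \<gamma>"

lemma plane_at_diff: "plane_at \<alpha> \<beta> \<gamma> x - plane_at \<alpha>' \<beta>' \<gamma>' x = plane_at (\<alpha> - \<alpha>') (\<beta> - \<beta>') (\<gamma> - \<gamma>') x"
  by (simp add: plane_at_def algebra_simps)

lemma plane_at_add_scaled:
  "plane_at (\<alpha> + t * \<alpha>') (\<beta> + t * \<beta>') (\<gamma> + t * \<gamma>') x = plane_at \<alpha> \<beta> \<gamma> x + t * plane_at \<alpha>' \<beta>' \<gamma>' x"
  by (simp add: plane_at_def algebra_simps)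

lemma orient_rotate: "orient a b c = orient b c a"
  unfolding orient_def by (simp add: algebra_simps)

lemma orient_swap: "orient a c b = - orient a b c"
  unfolding orient_def by (simp add: algebra_simps)

lemma orient_degenerate [simp]: "orient a a b = 0" "orient a b a = 0" "orient b a a = 0"
  unfolding orient_def by simp_all

lemma orient_as_plane:
  "orient P Q x = plane_at (snd P - snd Q) (fst Q - fst P) ((snd Q - snd P) * fst P - (fst Q - fst P) * snd P) x"
  by (simp add: plane_at_def orient_def algebra_simps)

text \<open>Cramer's rule in the plane: the values of an affine function at four points are linearly
  dependent, with the orientations of the complementary triples as coefficients.\<close>
lemma orient_plane_at_identity:
  "orient B X Y * plane_at \<alpha> \<beta> \<gamma> A - orient A X Y * plane_at \<alpha> \<beta> \<gamma> B
     + orient A B Y * plane_at \<alpha> \<beta> \<gamma> X - orient A B X * plane_at \<alpha> \<beta> \<gamma> Y = 0"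
  unfolding orient_def plane_at_def by (simp add: algebra_simps)

lemma plane_at_vanishing_on_line:
  assumes "plane_at \<alpha> \<beta> \<gamma> P = 0" "plane_at \<alpha> \<beta> \<gamma> Q = 0"
  shows "orient P Q Y * plane_at \<alpha> \<beta> \<gamma> X = orient P Q X * plane_at \<alpha> \<beta> \<gamma> Y"
  using orient_plane_at_identity[of Q X Y \<alpha> \<beta> \<gamma> P] assms by simp

lemma plane_through_two_points:
  assumes "P \<noteq> Q"
  obtains \<alpha> \<beta> \<gamma> where "plane_at \<alpha> \<beta> \<gamma> P = zP" "plane_at \<alpha> \<beta> \<gamma> Q = zQ"
proof -
  define d1 d2 where "d1 = fst Q - fst P" and "d2 = snd Q - snd P"
  define D where "D = d1\<^sup>2 + d2\<^sup>2"
  have "D > 0"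
    using assms unfolding D_def d1_def d2_def by (auto simp: prod_eq_iff sum_power2_gt_zero_iff)
  define \<alpha> \<beta> where "\<alpha> = (zQ - zP) * d1 / D" and "\<beta> = (zQ - zP) * d2 / D"
  define \<gamma> where "\<gamma> = zP - \<alpha> * fst P - \<beta> * snd P"
  have "plane_at \<alpha> \<beta> \<gamma> Q = zP + \<alpha> * d1 + \<beta> * d2"
    unfolding plane_at_def \<gamma>_def d1_def d2_def by (simp add: algebra_simps)
  also have "\<dots> = zP + (zQ - zP) * (d1\<^sup>2 + d2\<^sup>2) / D"
    unfolding \<alpha>_def \<beta>_def
    by (simp add: power2_eq_square add_divide_distrib diff_divide_distrib algebra_simps)
  also have "\<dots> = zQ"
    using \<open>D > 0\<close> by (simp add: D_def[symmetric])
  finally have "plane_at \<alpha> \<beta> \<gamma> Q = zQ" .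
  moreover have "plane_at \<alpha> \<beta> \<gamma> P = zP" unfolding plane_at_def \<gamma>_def by simp
  ultimately show thesis using that by blast
qed

text \<open>The points q i, i \<in> N, listed by increasing index along the boundary of a convex polygon
  whose orientation is given by the sign of \<sigma>.\<close>
locale convex_position =
  fixes q :: "nat \<Rightarrow> real \<times> real" and N :: "nat set" and \<sigma> :: real
  assumes ordered: "\<And>i j k. i \<in> N \<Longrightarrow> j \<in> N \<Longrightarrow> k \<in> N \<Longrightarrow> i < j \<Longrightarrow> j < k \<Longrightarrow>
    \<sigma> * orient (q i) (q j) (q k) > 0"
begin

definition signed_orient :: "nat \<Rightarrow> nat \<Rightarrow> nat \<Rightarrow> real" where
  "signed_orient x y w = \<sigma> * orient (q x) (q y) (q w)"

lemma signed_orient_pos: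
  assumes "x \<in> N" "y \<in> N" "w \<in> N" "cyclic_order x y w"
  shows "signed_orient x y w > 0"
  using assms ordered[of x y w] ordered[of y w x] ordered[of w x y]
  unfolding signed_orient_def cyclic_order_def by (metis orient_rotate)

lemma signed_orient_neg:
  assumes "x \<in> N" "y \<in> N" "w \<in> N" "distinct [x, y, w]" "\<not> cyclic_order x y w"
  shows "signed_orient x y w < 0"
proof -
  have "signed_orient x w y > 0"
    using assms cyclic_order_swap[of x y w] by (intro signed_orient_pos) auto
  then show ?thesis unfolding signed_orient_def by (simp add: orient_swap[of "q x" "q y" "q w"])
qed

lemma points_distinct:
  assumes "i \<in> N" "j \<in> N" "k \<in> N" "distinct [i, j, k]"
  shows "q i \<noteq> q j"
proof
  assume "q i = q j"
  then have "signed_orient i j k = 0" unfolding signed_orient_def by simp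
  then show False
    using assms signed_orient_pos[of i j k] signed_orient_neg[of i j k] by fastforce
qed

text \<open>The chords ab and xy cross, so an affine function that is nonnegative at a, b and
  nonpositive at x, y vanishes at the crossing point, and hence at x and y.\<close>
lemma crossing_chords_plane_zero:
  assumes N: "a \<in> N" "b \<in> N" "x \<in> N" "y \<in> N" and d: "distinct [a, b, x, y]"
    and cross: "cyclic_order a b x \<noteq> cyclic_order a b y"
    and sign: "plane_at \<alpha> \<beta> \<gamma> (q a) \<ge> 0" "plane_at \<alpha> \<beta> \<gamma> (q b) \<ge> 0"
      "plane_at \<alpha> \<beta> \<gamma> (q x) \<le> 0" "plane_at \<alpha> \<beta> \<gamma> (q y) \<le> 0"
  shows "plane_at \<alpha> \<beta> \<gamma> (q x) = 0 \<and> plane_at \<alpha> \<beta> \<gamma> (q y) = 0"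
proof -
  define f where "f k = plane_at \<alpha> \<beta> \<gamma> (q k)" for k
  have identity: "signed_orient b u v * f a - signed_orient a u v * f b
      + signed_orient a b v * f u - signed_orient a b u * f v = 0" for u v
    using arg_cong[OF orient_plane_at_identity[of "q b" "q u" "q v" \<alpha> \<beta> \<gamma> "q a"], of "(*) \<sigma>"]
    unfolding signed_orient_def f_def by (simp add: algebra_simps)
  have main: "f u = 0 \<and> f v = 0"
    if N: "u \<in> N" "v \<in> N" and d: "distinct [a, b, u, v]"
      and o: "cyclic_order a b u" "\<not> cyclic_order a b v"
      and sign: "f a \<ge> 0" "f b \<ge> 0" "f u \<le> 0" "f v \<le> 0" for u v
  proof -
    have c: "cyclic_order b u v" "\<not> cyclic_order a u v"
      using cyclic_order_crossing[OF d o] by auto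
    have "signed_orient b u v > 0" "signed_orient a u v < 0"
      "signed_orient a b v < 0" "signed_orient a b u > 0"
      using signed_orient_pos signed_orient_neg N \<open>a \<in> N\<close> \<open>b \<in> N\<close> d c o by auto
    with identity[of u v] sign show ?thesis
      by (smt (verit) mult_nonneg_nonneg mult_nonneg_nonpos mult_nonpos_nonpos
          mult_pos_neg mult_neg_pos zero_less_mult_iff)
  qed
  show ?thesis
  proof (cases "cyclic_order a b x")
    case True
    then show ?thesis using main[of x y] N d cross sign unfolding f_def by auto
  next
    case False
    then show ?thesis using main[of y x] N d cross sign unfolding f_def by auto
  qed
qed

end

section \<open>The lower convex hull of lifted points in convex position\<close>

definition beyond :: "nat set \<Rightarrow> nat \<Rightarrow> nat \<Rightarrow> nat \<Rightarrow> nat set" where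
  "beyond V a b c = {m \<in> V. m \<noteq> a \<and> m \<noteq> b \<and> cyclic_order a b m \<noteq> cyclic_order a b c}"

definition cut_off :: "nat set \<Rightarrow> nat \<Rightarrow> nat \<Rightarrow> nat \<Rightarrow> nat set" where
  "cut_off V a b c = {a, b} \<union> beyond V a b c"

lemma beyond_disjoint: "distinct [a, b, c] \<Longrightarrow> beyond V a b c \<inter> beyond V b c a = {}"
  using cyclic_order_separated_by_one_side[of a b c] unfolding beyond_def by fastforce

lemma beyond_cover:
  "distinct [a, b, c] \<Longrightarrow> V \<subseteq> {a, b, c} \<union> beyond V a b c \<union> beyond V b c a \<union> beyond V c a b"
  using cyclic_order_separated_by_some_side[of a b c] unfolding beyond_def by fastforce

lemma cut_off_inter: "distinct [a, b, c] \<Longrightarrow> cut_off V a b c \<inter> cut_off V b c a \<subseteq> {b}"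
  using beyond_disjoint[of a b c V] unfolding cut_off_def beyond_def by auto

lemma card_split_by_triangle:
  assumes "finite V" "{a, b, c} \<subseteq> V" "distinct [a, b, c]"
  shows "card V = 3 + card (beyond V a b c) + card (beyond V b c a) + card (beyond V c a b)"
proof -
  have V: "V = {a, b, c} \<union> beyond V a b c \<union> beyond V b c a \<union> beyond V c a b"
    using beyond_cover[OF assms(3)] assms(2) by (auto simp: beyond_def)
  have "finite (beyond V x y w)" for x y w using assms(1) unfolding beyond_def by simp
  moreover have "{a, b, c} \<inter> beyond V x y w = {}" if "{x, y, w} = {a, b, c}" for x y w
    using that unfolding beyond_def by auto
  moreover have "beyond V a b c \<inter> beyond V b c a = {}" "beyond V b c a \<inter> beyond V c a b = {}"
    "beyond V a b c \<inter> beyond V c a b = {}"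
    using beyond_disjoint[of a b c V] beyond_disjoint[of b c a V] beyond_disjoint[of c a b V] assms(3)
    by auto
  ultimately show ?thesis
    using assms(3) by (subst V) (simp add: card_Un_disjoint Int_Un_distrib2 insert_commute)
qed

lemma cut_off_subset: "a \<in> V \<Longrightarrow> b \<in> V \<Longrightarrow> cut_off V a b c \<subseteq> V"
  unfolding cut_off_def beyond_def by auto

lemma apex_not_in_cut_off: "c \<noteq> a \<Longrightarrow> c \<noteq> b \<Longrightarrow> c \<notin> cut_off V a b c"
  unfolding cut_off_def beyond_def by auto

lemma card_cut_off: "finite V \<Longrightarrow> a \<noteq> b \<Longrightarrow> card (cut_off V a b c) = 2 + card (beyond V a b c)"
  unfolding cut_off_def by (simp add: card_Un_disjoint beyond_def)

lemma card_3_obtain_third: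
  assumes "card T = 3" "i \<in> T" "j \<in> T" "i \<noteq> j"
  obtains x where "T = {i, j, x}" "x \<noteq> i" "x \<noteq> j"
proof -
  have "card (T - {i, j}) = 1"
    using assms by (simp add: card_Diff_subset card.infinite[of T])
  then obtain x where "T - {i, j} = {x}" by (meson card_1_singletonE)
  then show thesis using that assms(2,3) by blast
qed

lemma card_3_not_subset_pair: "card S = 3 \<Longrightarrow> \<not> S \<subseteq> {a, b}"
  using card_mono[of "{a, b}" S] by (cases "a = b") auto

locale lifted_convex_position = convex_position +
  fixes z :: "nat \<Rightarrow> real"
  assumes finite_N: "finite N"
    and no_four_coplanar: "\<And>i j k l \<alpha> \<beta> \<gamma>. i \<in> N \<Longrightarrow> j \<in> N \<Longrightarrow> k \<in> N \<Longrightarrow> l \<in> N \<Longrightarrow>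
      distinct [i, j, k, l] \<Longrightarrow> plane_at \<alpha> \<beta> \<gamma> (q i) = z i \<Longrightarrow> plane_at \<alpha> \<beta> \<gamma> (q j) = z j \<Longrightarrow>
      plane_at \<alpha> \<beta> \<gamma> (q k) = z k \<Longrightarrow> plane_at \<alpha> \<beta> \<gamma> (q l) = z l \<Longrightarrow> False"
begin

text \<open>A face of the lower convex hull of the lifted points (q i, z i), i \<in> V: the plane through
  the lifted T passes strictly below all other lifted points.\<close>
definition lower_face :: "nat set \<Rightarrow> nat set \<Rightarrow> bool" where
  "lower_face V T \<longleftrightarrow> T \<subseteq> V \<and> card T = 3 \<and>
     (\<exists>\<alpha> \<beta> \<gamma>. (\<forall>i\<in>T. plane_at \<alpha> \<beta> \<gamma> (q i) = z i) \<and> (\<forall>m\<in>V - T. plane_at \<alpha> \<beta> \<gamma> (q m) < z m))"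

lemma lower_face_mono: "lower_face V S \<Longrightarrow> S \<subseteq> W \<Longrightarrow> W \<subseteq> V \<Longrightarrow> lower_face W S"
  unfolding lower_face_def by blast

lemma lower_face_subset: "lower_face V S \<Longrightarrow> S \<subseteq> V"
  unfolding lower_face_def by blast

lemma lower_face_card: "lower_face V S \<Longrightarrow> card S = 3"
  unfolding lower_face_def by blast

lemma lower_faceE:
  assumes "lower_face V S"
  obtains \<alpha> \<beta> \<gamma> where "\<forall>i\<in>S. plane_at \<alpha> \<beta> \<gamma> (q i) = z i" "\<forall>m\<in>V - S. plane_at \<alpha> \<beta> \<gamma> (q m) < z m"
    "\<forall>m\<in>V. plane_at \<alpha> \<beta> \<gamma> (q m) \<le> z m"
  using assms unfolding lower_face_def by (metis DiffI order.order_iff_strict)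

lemma finite_lower_faces: "finite V \<Longrightarrow> finite {S. lower_face V S}"
  by (rule finite_subset[of _ "Pow V"]) (auto simp: lower_face_def)

lemma lower_face_through_edge_unique:
  assumes T1: "lower_face V T1" and T2: "lower_face V T2"
    and ij: "i \<in> T1" "j \<in> T1" "i \<in> T2" "j \<in> T2" "i \<noteq> j"
    and side: "\<forall>m\<in>V - {i, j}. e * orient (q i) (q j) (q m) > 0"
  shows "T1 = T2"
proof (rule ccontr)
  assume "T1 \<noteq> T2"
  obtain x where x: "T1 = {i, j, x}" "x \<noteq> i" "x \<noteq> j"
    by (rule card_3_obtain_third[OF lower_face_card[OF T1] ij(1,2,5)])
  obtain y where y: "T2 = {i, j, y}" "y \<noteq> i" "y \<noteq> j"
    by (rule card_3_obtain_third[OF lower_face_card[OF T2] ij(3,4,5)])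
  have "x \<noteq> y" "x \<in> V" "y \<in> V"
    using \<open>T1 \<noteq> T2\<close> x y lower_face_subset[OF T1] lower_face_subset[OF T2] by auto
  obtain \<alpha>1 \<beta>1 \<gamma>1 where P1: "\<forall>k\<in>T1. plane_at \<alpha>1 \<beta>1 \<gamma>1 (q k) = z k"
    "\<forall>m\<in>V - T1. plane_at \<alpha>1 \<beta>1 \<gamma>1 (q m) < z m" using lower_faceE[OF T1] by metis
  obtain \<alpha>2 \<beta>2 \<gamma>2 where P2: "\<forall>k\<in>T2. plane_at \<alpha>2 \<beta>2 \<gamma>2 (q k) = z k"
    "\<forall>m\<in>V - T2. plane_at \<alpha>2 \<beta>2 \<gamma>2 (q m) < z m" using lower_faceE[OF T2] by metis
  define d where "d P = plane_at (\<alpha>1 - \<alpha>2) (\<beta>1 - \<beta>2) (\<gamma>1 - \<gamma>2) P" for P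
  have d: "d P = plane_at \<alpha>1 \<beta>1 \<gamma>1 P - plane_at \<alpha>2 \<beta>2 \<gamma>2 P" for P
    unfolding d_def by (simp add: plane_at_diff)
  have "x \<in> V - T2" "y \<in> V - T1" using x y \<open>x \<noteq> y\<close> \<open>x \<in> V\<close> \<open>y \<in> V\<close> by auto
  then have "d (q x) > 0" "d (q y) < 0" using P1 P2 x y d by auto
  moreover have "e * orient (q i) (q j) (q x) > 0" "e * orient (q i) (q j) (q y) > 0"
    using side x y \<open>x \<in> V\<close> \<open>y \<in> V\<close> by auto
  ultimately have "(e * orient (q i) (q j) (q y)) * d (q x) > 0"
    "(e * orient (q i) (q j) (q x)) * d (q y) < 0"
    by (simp_all add: mult_pos_neg)
  moreover have "d (q i) = 0" "d (q j) = 0" using P1(1) P2(1) ij d by auto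
  then have "orient (q i) (q j) (q y) * d (q x) = orient (q i) (q j) (q x) * d (q y)"
    using plane_at_vanishing_on_line unfolding d_def by blast
  ultimately show False by (metis mult.assoc less_asym)
qed

text \<open>Tilt a plane through the lifted i and j about their connecting line until it first meets
  another lifted point; general position makes that point unique.\<close>
lemma lower_face_through_edge_exists:
  assumes V: "V \<subseteq> N" and ij: "i \<in> V" "j \<in> V" "i \<noteq> j" and ne: "V - {i, j} \<noteq> {}"
    and side: "\<forall>m\<in>V - {i, j}. e * orient (q i) (q j) (q m) > 0"
  obtains T where "lower_face V T" "i \<in> T" "j \<in> T"
proof -
  define h where "h x = e * orient (q i) (q j) x" for x
  have h_pos: "h (q m) > 0" if "m \<in> V - {i, j}" for m using side that unfolding h_def by blast
  have "q i \<noteq> q j" using h_pos ne unfolding h_def by fastforce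
  then obtain \<alpha>0 \<beta>0 \<gamma>0 where base: "plane_at \<alpha>0 \<beta>0 \<gamma>0 (q i) = z i" "plane_at \<alpha>0 \<beta>0 \<gamma>0 (q j) = z j"
    by (rule plane_through_two_points)
  define slope where "slope m = (z m - plane_at \<alpha>0 \<beta>0 \<gamma>0 (q m)) / h (q m)" for m
  define M where "M = Min (slope ` (V - {i, j}))"
  have finV: "finite V" using V finite_N finite_subset by blast
  have "M \<in> slope ` (V - {i, j})" unfolding M_def using finV ne by (intro Min_in) auto
  then obtain m0 where m0: "m0 \<in> V - {i, j}" "slope m0 = M" by blast
  have M_le: "M \<le> slope m" if "m \<in> V - {i, j}" for m
    unfolding M_def using finV that by (intro Min_le) auto
  obtain \<alpha> \<beta> \<gamma> where tilt: "\<And>x. plane_at \<alpha> \<beta> \<gamma> x = plane_at \<alpha>0 \<beta>0 \<gamma>0 x + M * h x"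
    using plane_at_add_scaled[of \<alpha>0 "M * e" _ \<beta>0 _ \<gamma>0] unfolding h_def orient_as_plane
    by (metis mult.assoc)
  have at: "plane_at \<alpha> \<beta> \<gamma> (q m) = z m \<longleftrightarrow> slope m = M" if "m \<in> V - {i, j}" for m
    using h_pos[OF that] unfolding tilt slope_def by (auto simp: field_simps)
  have on: "plane_at \<alpha> \<beta> \<gamma> (q k) = z k" if "k \<in> {i, j, m0}" for k
    using that tilt base at[OF m0(1)] m0(2) unfolding h_def by auto
  have below: "plane_at \<alpha> \<beta> \<gamma> (q m) < z m" if m: "m \<in> V - {i, j, m0}" for m
  proof -
    have "slope m \<noteq> M"
      using at[of m] on no_four_coplanar[of i j m0 m \<alpha> \<beta> \<gamma>] m m0 ij V by auto
    then have "M < slope m" using M_le[of m] m by auto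
    then show ?thesis
      using h_pos[of m] m unfolding tilt slope_def by (auto simp: field_simps)
  qed
  have "card {i, j, m0} = 3" using ij m0 by auto
  then have "lower_face V {i, j, m0}" unfolding lower_face_def using ij m0 on below by blast
  then show thesis using that by blast
qed

text \<open>The plane of S lies below that of the face {a, b, c} at a and b and above it at a vertex
  beyond ab; by crossing chords, it lies below it at every vertex on the same side of ab as c.\<close>
lemma lower_face_of_cut_off:
  assumes V: "V \<subseteq> N" and T: "lower_face V {a, b, c}" "distinct [a, b, c]"
    and S: "lower_face (cut_off V a b c) S"
  shows "lower_face V S"
proof -
  let ?W = "cut_off V a b c"
  have WV: "?W \<subseteq> V" using T unfolding lower_face_def cut_off_def beyond_def by auto
  obtain \<alpha>T \<beta>T \<gamma>T where PT: "\<forall>k\<in>{a, b, c}. plane_at \<alpha>T \<beta>T \<gamma>T (q k) = z k"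
    "\<forall>m\<in>V - {a, b, c}. plane_at \<alpha>T \<beta>T \<gamma>T (q m) < z m" "\<forall>m\<in>V. plane_at \<alpha>T \<beta>T \<gamma>T (q m) \<le> z m"
    using lower_faceE[OF T(1)] by blast
  obtain \<alpha>S \<beta>S \<gamma>S where PS: "\<forall>k\<in>S. plane_at \<alpha>S \<beta>S \<gamma>S (q k) = z k"
    "\<forall>m\<in>?W - S. plane_at \<alpha>S \<beta>S \<gamma>S (q m) < z m" "\<forall>m\<in>?W. plane_at \<alpha>S \<beta>S \<gamma>S (q m) \<le> z m"
    using lower_faceE[OF S] by blast
  have SW: "S \<subseteq> ?W" "card S = 3" using S unfolding lower_face_def by auto
  have "\<not> S \<subseteq> {a, b}" by (rule card_3_not_subset_pair[OF SW(2)])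
  then obtain s where s: "s \<in> S" "s \<in> beyond V a b c" using SW(1) unfolding cut_off_def by blast
  define d where "d P = plane_at (\<alpha>T - \<alpha>S) (\<beta>T - \<beta>S) (\<gamma>T - \<gamma>S) P" for P
  have d: "d P = plane_at \<alpha>T \<beta>T \<gamma>T P - plane_at \<alpha>S \<beta>S \<gamma>S P" for P
    unfolding d_def by (simp add: plane_at_diff)
  have s': "s \<in> V" "s \<noteq> a" "s \<noteq> b" "s \<noteq> c" "cyclic_order a b s \<noteq> cyclic_order a b c"
    using s(2) unfolding beyond_def by auto
  have "a \<in> ?W" "b \<in> ?W" unfolding cut_off_def by auto
  then have "d (q a) \<ge> 0" "d (q b) \<ge> 0" using PT(1) PS(3) d by auto
  have "d (q s) < 0" using PT(2) PS(1) s(1) s' d by auto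
  have "plane_at \<alpha>S \<beta>S \<gamma>S (q m) < z m" if m: "m \<in> V - S" for m
  proof (cases "m \<in> ?W")
    case True
    then show ?thesis using PS m by blast
  next
    case False
    then have m': "m \<noteq> a" "m \<noteq> b" "cyclic_order a b m = cyclic_order a b c"
      using m unfolding cut_off_def beyond_def by auto
    have "d (q m) > 0"
    proof (rule ccontr)
      assume "\<not> d (q m) > 0"
      moreover have "distinct [a, b, s, m]" using T(2) s' m' False s by (auto simp: cut_off_def)
      moreover have "a \<in> N" "b \<in> N" "s \<in> N" "m \<in> N"
        using WV \<open>a \<in> ?W\<close> \<open>b \<in> ?W\<close> s' m V by auto
      ultimately have "d (q s) = 0"
        using crossing_chords_plane_zero[of a b s m] \<open>d (q a) \<ge> 0\<close> \<open>d (q b) \<ge> 0\<close>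
          \<open>d (q s) < 0\<close> s' m' unfolding d_def by auto
      then show False using \<open>d (q s) < 0\<close> by simp
    qed
    then show ?thesis using PT(3) m d by fastforce
  qed
  then show ?thesis unfolding lower_face_def using SW WV PS(1) by blast
qed

lemma lower_face_in_cut_off:
  assumes V: "V \<subseteq> N" and T: "lower_face V {a, b, c}" "distinct [a, b, c]"
    and S: "lower_face V S" and x: "x \<in> S" "x \<in> beyond V a b c"
  shows "S \<subseteq> cut_off V a b c"
proof
  fix y assume y: "y \<in> S"
  show "y \<in> cut_off V a b c"
  proof (rule ccontr)
    assume y_out: "y \<notin> cut_off V a b c"
    have "y \<in> V" using S y unfolding lower_face_def by auto
    then have y': "y \<noteq> a" "y \<noteq> b" "cyclic_order a b y = cyclic_order a b c"
      using y_out unfolding cut_off_def beyond_def by auto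
    obtain \<alpha>T \<beta>T \<gamma>T where PT: "\<forall>k\<in>{a, b, c}. plane_at \<alpha>T \<beta>T \<gamma>T (q k) = z k"
      "\<forall>m\<in>V - {a, b, c}. plane_at \<alpha>T \<beta>T \<gamma>T (q m) < z m" "\<forall>m\<in>V. plane_at \<alpha>T \<beta>T \<gamma>T (q m) \<le> z m"
      using lower_faceE[OF T(1)] by blast
    obtain \<alpha>S \<beta>S \<gamma>S where PS: "\<forall>k\<in>S. plane_at \<alpha>S \<beta>S \<gamma>S (q k) = z k"
      "\<forall>m\<in>V. plane_at \<alpha>S \<beta>S \<gamma>S (q m) \<le> z m"
      using lower_faceE[OF S] by metis
    define d where "d P = plane_at (\<alpha>T - \<alpha>S) (\<beta>T - \<beta>S) (\<gamma>T - \<gamma>S) P" for P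
    have d: "d P = plane_at \<alpha>T \<beta>T \<gamma>T P - plane_at \<alpha>S \<beta>S \<gamma>S P" for P
      unfolding d_def by (simp add: plane_at_diff)
    have abV: "a \<in> V" "b \<in> V" using T unfolding lower_face_def by auto
    have x': "x \<in> V" "x \<noteq> a" "x \<noteq> b" "x \<noteq> c" "cyclic_order a b x \<noteq> cyclic_order a b c"
      using x(2) unfolding beyond_def by auto
    have "d (q a) \<ge> 0" "d (q b) \<ge> 0" using PT(1) PS(2) abV d by auto
    moreover have "d (q x) < 0" using PT(2) PS(1) x(1) x' d by auto
    moreover have "d (q y) \<le> 0" using PT(3) PS(1) y \<open>y \<in> V\<close> d by auto
    moreover have "distinct [a, b, x, y]" using x' y' T(2) by auto
    moreover have "x \<in> N" "y \<in> N" "a \<in> N" "b \<in> N" using V abV x' \<open>y \<in> V\<close> by auto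
    ultimately have "d (q x) = 0"
      using crossing_chords_plane_zero[of a b x y] x' y' unfolding d_def by auto
    then show False using \<open>d (q x) < 0\<close> by simp
  qed
qed

lemma lower_faces_split:
  assumes V: "V \<subseteq> N" and T: "lower_face V {a, b, c}" "distinct [a, b, c]"
  shows "{S. lower_face V S} = insert {a, b, c} ({S. lower_face (cut_off V a b c) S}
    \<union> {S. lower_face (cut_off V b c a) S} \<union> {S. lower_face (cut_off V c a b) S})"
proof -
  have T': "lower_face V {b, c, a}" "lower_face V {c, a, b}" using T(1) by (simp_all add: insert_commute)
  have rot: "distinct [b, c, a]" "distinct [c, a, b]" using T(2) by auto
  have abc: "a \<in> V" "b \<in> V" "c \<in> V" using lower_face_subset[OF T(1)] by auto
  have "S \<subseteq> cut_off V a b c \<or> S \<subseteq> cut_off V b c a \<or> S \<subseteq> cut_off V c a b"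
    if S: "lower_face V S" "S \<noteq> {a, b, c}" for S
  proof -
    have "\<not> S \<subseteq> {a, b, c}"
      using S lower_face_card[OF S(1)] lower_face_card[OF T(1)] card_subset_eq[of "{a, b, c}" S] by auto
    then obtain x where x: "x \<in> S" "x \<notin> {a, b, c}" by blast
    then have "x \<in> beyond V a b c \<or> x \<in> beyond V b c a \<or> x \<in> beyond V c a b"
      using beyond_cover[OF T(2), of V] lower_face_subset[OF S(1)] by blast
    then show ?thesis
      using lower_face_in_cut_off[OF V T S(1)] lower_face_in_cut_off[OF V T'(1) rot(1) S(1)]
        lower_face_in_cut_off[OF V T'(2) rot(2) S(1)] x(1) by blast
  qed
  then have "lower_face V S \<Longrightarrow> S \<noteq> {a, b, c} \<Longrightarrow>
      lower_face (cut_off V a b c) S \<or> lower_face (cut_off V b c a) S \<or> lower_face (cut_off V c a b) S"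
    for S using lower_face_mono[of V S] cut_off_subset abc by metis
  moreover have "lower_face V S"
    if "lower_face (cut_off V a b c) S \<or> lower_face (cut_off V b c a) S \<or> lower_face (cut_off V c a b) S"
    for S using that lower_face_of_cut_off[OF V T] lower_face_of_cut_off[OF V T'(1) rot(1)]
      lower_face_of_cut_off[OF V T'(2) rot(2)] by blast
  ultimately show ?thesis using T(1) by blast
qed

lemma card_lower_faces_split:
  assumes V: "V \<subseteq> N" and T: "lower_face V {a, b, c}" "distinct [a, b, c]"
  shows "card {S. lower_face V S} = 1 + card {S. lower_face (cut_off V a b c) S}
    + card {S. lower_face (cut_off V b c a) S} + card {S. lower_face (cut_off V c a b) S}"
proof -
  have disjoint: "{S. lower_face (cut_off V x y w) S} \<inter> {S. lower_face (cut_off V y w x) S} = {}"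
    if "distinct [x, y, w]" for x y w
  proof -
    have False if S: "lower_face (cut_off V x y w) S" "lower_face (cut_off V y w x) S" for S
    proof -
      have "S \<subseteq> {y, y}"
        using lower_face_subset[OF S(1)] lower_face_subset[OF S(2)]
          cut_off_inter[OF \<open>distinct [x, y, w]\<close>, of V] by auto
      with card_3_not_subset_pair[OF lower_face_card[OF S(1)]] show False by contradiction
    qed
    then show ?thesis by blast
  qed
  let ?A = "{S. lower_face (cut_off V a b c) S}" and ?B = "{S. lower_face (cut_off V b c a) S}"
    and ?C = "{S. lower_face (cut_off V c a b) S}"
  have "finite V" using V finite_N finite_subset by blast
  then have fin: "finite {S. lower_face (cut_off V x y w) S}" for x y w
    by (intro finite_lower_faces) (simp add: cut_off_def beyond_def)
  have apex: "{x, y, w} \<notin> {S. lower_face (cut_off V x y w) S}" if "distinct [x, y, w]" for x y w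
    using lower_face_subset[of "cut_off V x y w" "{x, y, w}"] apex_not_in_cut_off[of w x y V] that
    by auto
  have "{b, c, a} = {a, b, c}" "{c, a, b} = {a, b, c}" by auto
  then have "{a, b, c} \<notin> ?A" "{a, b, c} \<notin> ?B" "{a, b, c} \<notin> ?C"
    using apex[of a b c] apex[of b c a] apex[of c a b] T(2) by auto
  then have card_insert: "card (insert {a, b, c} (?A \<union> ?B \<union> ?C)) = 1 + card (?A \<union> ?B \<union> ?C)"
    using fin by (simp add: insert_commute)
  have disj: "?A \<inter> ?B = {}" "?B \<inter> ?C = {}" "?C \<inter> ?A = {}"
    using disjoint[of a b c] disjoint[of b c a] disjoint[of c a b] T(2) by auto
  have "card (?A \<union> ?B \<union> ?C) = card (?A \<union> ?B) + card ?C"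
    using fin disj by (intro card_Un_disjoint) blast+
  also have "card (?A \<union> ?B) = card ?A + card ?B"
    using fin disj by (intro card_Un_disjoint) blast+
  finally show ?thesis using card_insert by (simp add: lower_faces_split[OF V T])
qed

lemma lower_face_exists:
  assumes V: "V \<subseteq> N" and "3 \<le> card V"
  obtains a b c where "lower_face V {a, b, c}" "distinct [a, b, c]"
proof -
  have finV: "finite V" using V finite_N finite_subset by blast
  define i where "i = Min V"
  define j where "j = Min (V - {i})"
  have i: "i \<in> V" unfolding i_def using finV assms(2) by (intro Min_in) auto
  have "card (V - {i}) \<ge> 2" using i finV assms(2) by simp
  then have "V - {i} \<noteq> {}" by (metis card.empty not_numeral_le_zero)
  then have j: "j \<in> V - {i}" unfolding j_def using finV by (intro Min_in) auto
  have "card (V - {i, j}) = card V - 2" using i j finV by (subst card_Diff_subset) auto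
  then have "V - {i, j} \<noteq> {}" using assms(2) by fastforce
  moreover have "\<forall>m\<in>V - {i, j}. \<sigma> * orient (q i) (q j) (q m) > 0"
  proof
    fix m assume m: "m \<in> V - {i, j}"
    have "i < j" "j < m" using m j finV unfolding i_def j_def by (auto simp: le_neq_trans)
    then show "\<sigma> * orient (q i) (q j) (q m) > 0" using ordered m i j V by blast
  qed
  ultimately obtain T where T: "lower_face V T"
    using lower_face_through_edge_exists[OF V i] j by blast
  then obtain a b c where "T = {a, b, c}" "distinct [a, b, c]"
    using lower_face_card[OF T] by (auto simp: card_3_iff)
  then show thesis using that T by blast
qed

text \<open>The lower face on the edge between the two smallest indices splits the polygon into itself
  and the three polygons cut off by its sides.\<close>
lemma card_lower_faces:
  assumes "V \<subseteq> N" "2 \<le> card V"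
  shows "card {S. lower_face V S} = card V - 2"
  using assms
proof (induction "card V" arbitrary: V rule: less_induct)
  case (less V)
  have finV: "finite V" using less.prems(1) finite_N finite_subset by blast
  show ?case
  proof (cases "card V = 2")
    case True
    have False if "lower_face V S" for S
      using card_mono[OF finV lower_face_subset[OF that]] lower_face_card[OF that] True by simp
    then have "{S. lower_face V S} = {}" by blast
    then show ?thesis using True by (metis card.empty diff_self_eq_0)
  next
    case False
    then have "3 \<le> card V" using less.prems(2) by simp
    then obtain a b c where T: "lower_face V {a, b, c}" "distinct [a, b, c]"
      by (rule lower_face_exists[OF less.prems(1)])
    have abc: "{a, b, c} \<subseteq> V" using lower_face_subset[OF T(1)] .
    have IH: "card {S. lower_face (cut_off V x y w) S} = card (beyond V x y w)"
      if xyw: "{x, y, w} = {a, b, c}" "distinct [x, y, w]" for x y w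
    proof -
      have "x \<in> V" "y \<in> V" "w \<in> V" using xyw(1) abc by auto
      then have sub: "cut_off V x y w \<subset> V"
        using cut_off_subset[of x V y w] apex_not_in_cut_off[of w x y V] xyw(2) by auto
      then have "card (cut_off V x y w) < card V" by (rule psubset_card_mono[OF finV])
      moreover have "cut_off V x y w \<subseteq> N" using sub less.prems(1) by blast
      moreover have "card (cut_off V x y w) = 2 + card (beyond V x y w)"
        using card_cut_off[OF finV] xyw(2) by simp
      ultimately show ?thesis using less.hyps[of "cut_off V x y w"] by simp
    qed
    have rot: "{b, c, a} = {a, b, c}" "{c, a, b} = {a, b, c}" "distinct [b, c, a]" "distinct [c, a, b]"
      using T(2) by auto
    show ?thesis
      using card_lower_faces_split[OF less.prems(1) T] card_split_by_triangle[OF finV abc T(2)]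
        IH[OF refl T(2)] IH[OF rot(1,3)] IH[OF rot(2,4)] by simp
  qed
qed

lemma polygon_edge_in_unique_lower_face:
  assumes N: "N = {0..<n}" and "3 \<le> n" "k < n"
  shows "card {T. lower_face N T \<and> k \<in> T \<and> Suc k mod n \<in> T} = 1"
proof -
  let ?k' = "Suc k mod n"
  have side: "\<forall>m\<in>N - {k, ?k'}. \<sigma> * orient (q k) (q ?k') (q m) > 0"
    using signed_orient_pos cyclic_order_polygon_edge \<open>k < n\<close> unfolding signed_orient_def N by auto
  have "k \<noteq> ?k'" "?k' \<in> N" "k \<in> N" using assms by (auto simp: mod_Suc)
  moreover have "card (N - {k, ?k'}) = n - 2"
    using \<open>k \<noteq> ?k'\<close> \<open>?k' \<in> N\<close> \<open>k \<in> N\<close> unfolding N by (subst card_Diff_subset) auto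
  then have "N - {k, ?k'} \<noteq> {}" using \<open>3 \<le> n\<close> by fastforce
  ultimately obtain T0 where T0: "lower_face N T0" "k \<in> T0" "?k' \<in> T0"
    using lower_face_through_edge_exists[of N k ?k'] side by blast
  then have "{T. lower_face N T \<and> k \<in> T \<and> ?k' \<in> T} = {T0}"
    using lower_face_through_edge_unique[OF _ T0(1) _ _ T0(2,3) \<open>k \<noteq> ?k'\<close> side] by blast
  then show ?thesis by simp
qed

end

section \<open>Boundary edges of the triangles\<close>

lemma Suc_mod_neq_self: "k < n \<Longrightarrow> 2 \<le> n \<Longrightarrow> Suc k mod n \<noteq> k"
  by (simp add: mod_Suc)

lemma Suc_Suc_mod_neq_self: "k < n \<Longrightarrow> 3 \<le> n \<Longrightarrow> Suc (Suc k) mod n \<noteq> k"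
  by (simp add: mod_if) arith

lemma Suc_Suc_Suc_mod_neq_self: "k < n \<Longrightarrow> 4 \<le> n \<Longrightarrow> Suc (Suc (Suc k)) mod n \<noteq> k"
  by (simp add: mod_if) arith

lemma Suc_mod_inj: "a < n \<Longrightarrow> b < n \<Longrightarrow> Suc a mod n = Suc b mod n \<Longrightarrow> a = b"
  by (simp add: mod_Suc split: if_splits)

definition polygon_edges :: "nat \<Rightarrow> nat set \<Rightarrow> nat set" where
  "polygon_edges n T = {k \<in> {0..<n}. k \<in> T \<and> Suc k mod n \<in> T}"

lemma card_polygon_edges_neighboring:
  assumes n: "4 \<le> n" and N: "neighboring n T"
  shows "card (polygon_edges n T) = 2"
proof -
  obtain i where i: "i < n" "T = {i, Suc i mod n, Suc (Suc i) mod n}"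
    using N unfolding neighboring_def by blast
  define j l where "j = Suc i mod n" and "l = Suc (Suc i) mod n"
  have T: "T = {i, j, l}" using i(2) unfolding j_def l_def .
  have jl: "j < n" "l < n" using i(1) unfolding j_def l_def by simp_all
  have succ: "Suc i mod n = j" "Suc j mod n = l" "Suc l mod n = Suc (Suc (Suc i)) mod n"
    unfolding j_def l_def by (simp_all add: mod_Suc_eq)
  have "i \<noteq> j" using Suc_mod_neq_self[of i n] i(1) n unfolding j_def by simp
  moreover have "l \<noteq> i" using Suc_Suc_mod_neq_self[of i n] i(1) n unfolding l_def by simp
  moreover have "l \<noteq> j" using Suc_mod_neq_self[of j n] jl(1) n unfolding succ(2) by simp
  moreover have "Suc l mod n \<noteq> i" "Suc l mod n \<noteq> j" "Suc l mod n \<noteq> l"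
    using Suc_Suc_Suc_mod_neq_self[of i n] Suc_mod_inj[of l n i] Suc_mod_neq_self[of l n] i(1) jl n
      \<open>l \<noteq> i\<close> unfolding succ(3) j_def by auto
  ultimately have "polygon_edges n T = {i, j}"
    unfolding polygon_edges_def T using i(1) jl succ(1,2) by auto
  then show ?thesis using \<open>i \<noteq> j\<close> by simp
qed

lemma neighboring_if_two_polygon_edges:
  assumes n: "4 \<le> n" and T: "T \<in> triples n" and two: "2 \<le> card (polygon_edges n T)"
  shows "neighboring n T"
proof -
  have "\<not> card (polygon_edges n T) \<le> Suc 0" using two by simp
  then obtain k k' where kk: "k \<in> polygon_edges n T" "k' \<in> polygon_edges n T" "k \<noteq> k'"
    using card_le_Suc0_iff_eq[of "polygon_edges n T"] by (auto simp: polygon_edges_def)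
  have Tn: "T \<subseteq> {0..<n}" "card T = 3" using T unfolding triples_def by auto
  then have fT: "finite T" using finite_subset by blast
  have k: "k < n" "k' < n" "k \<in> T" "k' \<in> T" "Suc k mod n \<in> T" "Suc k' mod n \<in> T"
    using kk unfolding polygon_edges_def by auto
  have "k' = Suc k mod n \<or> k = Suc k' mod n"
  proof (rule ccontr)
    assume "\<not> (k' = Suc k mod n \<or> k = Suc k' mod n)"
    moreover have "Suc k mod n \<noteq> Suc k' mod n" using Suc_mod_inj k kk by blast
    moreover have "k \<noteq> Suc k mod n" "k' \<noteq> Suc k' mod n"
      using Suc_mod_neq_self[of k n] Suc_mod_neq_self[of k' n] k n by auto
    ultimately have four: "card {k, Suc k mod n, k', Suc k' mod n} = 4" using kk by auto
    have "card {k, Suc k mod n, k', Suc k' mod n} \<le> card T" using k by (intro card_mono[OF fT]) auto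
    then show False using four Tn(2) by simp
  qed
  then obtain a where a: "a < n" "a \<in> T" "Suc a mod n \<in> T" "Suc (Suc a mod n) mod n \<in> T"
  proof
    assume "k' = Suc k mod n"
    with k(6) have "Suc (Suc k mod n) mod n \<in> T" by simp
    then show thesis by (rule that[OF k(1) k(3) k(5)])
  next
    assume "k = Suc k' mod n"
    with k(5) have "Suc (Suc k' mod n) mod n \<in> T" by simp
    then show thesis by (rule that[OF k(2) k(4) k(6)])
  qed
  have "Suc (Suc a mod n) mod n = Suc (Suc a) mod n" by (simp add: mod_Suc_eq)
  then have sub: "{a, Suc a mod n, Suc (Suc a) mod n} \<subseteq> T" using a by auto
  have "a \<noteq> Suc a mod n" "Suc (Suc a) mod n \<noteq> a" "Suc (Suc a) mod n \<noteq> Suc a mod n"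
    using Suc_mod_neq_self[of a n] Suc_Suc_mod_neq_self[of a n] Suc_mod_neq_self[of "Suc a mod n" n]
      \<open>Suc (Suc a mod n) mod n = _\<close> a(1) n by auto
  then have "card {a, Suc a mod n, Suc (Suc a) mod n} = 3" by simp
  then have "T = {a, Suc a mod n, Suc (Suc a) mod n}" using card_subset_eq[OF fT sub] Tn(2) by simp
  then show ?thesis unfolding neighboring_def using \<open>a < n\<close> by blast
qed

lemma polygon_edges_disjoint_triple: "disjoint_triple n T \<Longrightarrow> polygon_edges n T = {}"
  unfolding disjoint_triple_def polygon_edges_def adjacent_def by blast

lemma card_polygon_edges_intermediate:
  assumes n: "4 \<le> n" and T: "T \<in> triples n" and I: "intermediate n T"
  shows "card (polygon_edges n T) = 1"
proof -
  obtain i j where ij: "i \<in> T" "j \<in> T" "adjacent n i j"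
    using I unfolding intermediate_def disjoint_triple_def by blast
  moreover have "i < n" "j < n" using ij T unfolding triples_def by auto
  ultimately have "polygon_edges n T \<noteq> {}" unfolding adjacent_def polygon_edges_def by auto
  then have "card (polygon_edges n T) \<ge> 1"
    by (simp add: Suc_leI card_gt_0_iff polygon_edges_def)
  moreover have "\<not> 2 \<le> card (polygon_edges n T)"
    using neighboring_if_two_polygon_edges[OF n T] I unfolding intermediate_def by blast
  ultimately show ?thesis by simp
qed

lemma neighboring_not_disjoint_triple: "neighboring n T \<Longrightarrow> \<not> disjoint_triple n T"
  unfolding neighboring_def disjoint_triple_def adjacent_def by blast

lemma finite_triples: "finite (triples n)"
  unfolding triples_def by (rule finite_subset[of _ "Pow {0..<n}"]) auto

lemma sum_card_polygon_edges:
  assumes F: "finite F" and edge: "\<And>k. k < n \<Longrightarrow> card {T \<in> F. k \<in> T \<and> Suc k mod n \<in> T} = 1"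
  shows "(\<Sum>T\<in>F. card (polygon_edges n T)) = n"
proof -
  have "(\<Sum>T\<in>F. card (polygon_edges n T))
      = (\<Sum>T\<in>F. \<Sum>k\<in>{0..<n}. if k \<in> T \<and> Suc k mod n \<in> T then 1 else 0)"
    unfolding polygon_edges_def by (simp add: sum.If_cases Int_def)
  also have "\<dots> = (\<Sum>k\<in>{0..<n}. \<Sum>T\<in>F. if k \<in> T \<and> Suc k mod n \<in> T then 1 else 0)"
    by (rule sum.swap)
  also have "\<dots> = (\<Sum>k\<in>{0..<n}. card {T \<in> F. k \<in> T \<and> Suc k mod n \<in> T})"
    using F by (simp add: sum.If_cases Int_def)
  also have "\<dots> = n" using edge by simp
  finally show ?thesis .
qed

lemma triangle_type_counts:
  assumes n: "4 \<le> n" and card: "card {T \<in> triples n. P T} = n - 2"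
    and edge: "\<And>k. k < n \<Longrightarrow> card {T \<in> triples n. P T \<and> k \<in> T \<and> Suc k mod n \<in> T} = 1"
  shows "int (card {T \<in> triples n. P T \<and> neighboring n T}) - int (card {T \<in> triples n. P T \<and> disjoint_triple n T}) = 2
    \<and> card {T \<in> triples n. P T \<and> neighboring n T} + card {T \<in> triples n. P T \<and> disjoint_triple n T}
      + card {T \<in> triples n. P T \<and> intermediate n T} = n - 2"
proof -
  define F where "F = {T \<in> triples n. P T}"
  define A B C where "A = {T \<in> triples n. P T \<and> neighboring n T}"
    and "B = {T \<in> triples n. P T \<and> disjoint_triple n T}"
    and "C = {T \<in> triples n. P T \<and> intermediate n T}"
  have fin: "finite A" "finite B" "finite C" unfolding A_def B_def C_def using finite_triples by simp_all
  have disj: "A \<inter> B = {}" "A \<inter> C = {}" "B \<inter> C = {}"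
    unfolding A_def B_def C_def intermediate_def using neighboring_not_disjoint_triple by auto
  have F: "F = A \<union> B \<union> C" unfolding F_def A_def B_def C_def intermediate_def by auto
  have "card A + card B + card C = n - 2"
    using card fin disj unfolding F_def[symmetric] F by (simp add: card_Un_disjoint Int_Un_distrib2)
  moreover have "(\<Sum>T\<in>F. card (polygon_edges n T)) = n"
    using finite_triples edge unfolding F_def by (intro sum_card_polygon_edges) auto
  moreover have "(\<Sum>T\<in>F. card (polygon_edges n T)) = 2 * card A + card C"
  proof -
    have "(\<Sum>T\<in>F. card (polygon_edges n T)) = (\<Sum>T\<in>A. card (polygon_edges n T))
        + (\<Sum>T\<in>B. card (polygon_edges n T)) + (\<Sum>T\<in>C. card (polygon_edges n T))"
      unfolding F using fin disj by (simp add: sum.union_disjoint Int_Un_distrib2)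
    also have "\<dots> = (\<Sum>T\<in>A. 2) + (\<Sum>T\<in>B. 0) + (\<Sum>T\<in>C. 1)"
      using card_polygon_edges_neighboring[OF n] polygon_edges_disjoint_triple
        card_polygon_edges_intermediate[OF n] unfolding A_def B_def C_def by simp
    finally show ?thesis by simp
  qed
  ultimately show ?thesis unfolding A_def B_def C_def using n by linarith
qed

lemma orient_pos_of_edges:
  assumes edges: "\<forall>i<n. \<forall>j<n. j \<noteq> i \<and> j \<noteq> Suc i mod n \<longrightarrow> \<sigma> * orient (p i) (p (Suc i mod n)) (p j) > 0"
  shows "i < j \<Longrightarrow> j < k \<Longrightarrow> k < n \<Longrightarrow> \<sigma> * orient (p i) (p j) (p k) > 0"
proof (induction k arbitrary: j)
  case 0
  then show ?case by simp
next
  case (Suc k)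
  define so where "so a b c = \<sigma> * orient (p a) (p b) (p c)" for a b c
  have edge: "so a (Suc a) b > 0" if "Suc a < n" "b < n" "b \<noteq> a" "b \<noteq> Suc a" for a b
    using edges that unfolding so_def by (metis Suc_lessD mod_less)
  have rotate: "so a b c = so b c a" for a b c unfolding so_def by (simp add: orient_rotate[of "p a"])
  show ?case
  proof (cases "j = k")
    case True
    have "so i k (Suc k) > 0" using edge[of k i] rotate[of i k "Suc k"] Suc.prems by auto
    then show ?thesis using True unfolding so_def by simp
  next
    case False
    then have "j < k" using Suc.prems by simp
    have pencil: "so i j k * so i (Suc i) (Suc k) + so i k (Suc k) * so i (Suc i) j
        + so i (Suc k) j * so i (Suc i) k = 0"
      unfolding so_def orient_def by (simp add: algebra_simps)
    have "so i j k * so i (Suc i) (Suc k) > 0"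
      using Suc.IH[of j] \<open>j < k\<close> Suc.prems edge[of i "Suc k"] unfolding so_def by simp
    moreover have "so i k (Suc k) * so i (Suc i) j \<ge> 0"
    proof -
      have "so i k (Suc k) > 0" using edge[of k i] rotate[of i k] Suc.prems \<open>j < k\<close> by auto
      moreover have "so i (Suc i) j \<ge> 0"
        using edge[of i j] Suc.prems \<open>j < k\<close> by (cases "j = Suc i") (auto simp: so_def)
      ultimately show ?thesis by simp
    qed
    ultimately have "so i (Suc k) j * so i (Suc i) k < 0" using pencil by linarith
    moreover have "so i (Suc i) k > 0" using edge[of i k] Suc.prems \<open>j < k\<close> by auto
    ultimately have "so i (Suc k) j < 0" by (simp add: mult_less_0_iff)
    then show ?thesis unfolding so_def by (simp add: orient_swap[of "p i" "p j"])
  qed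
qed

lemma convex_polygon_convex_position:
  assumes "convex_polygon n p"
  obtains \<sigma> where "convex_position p {0..<n} \<sigma>"
proof -
  obtain \<sigma> :: real
    where "\<forall>i<n. \<forall>j<n. j \<noteq> i \<and> j \<noteq> Suc i mod n \<longrightarrow> \<sigma> * orient (p i) (p (Suc i mod n)) (p j) > 0"
    using assms unfolding convex_polygon_def by (metis mult_1 mult_minus1 neg_0_less_iff_less)
  then have "convex_position p {0..<n} \<sigma>"
    by unfold_locales (auto intro: orient_pos_of_edges)
  then show thesis by (rule that)
qed

section \<open>Lifting circles to planes\<close>

definition paraboloid :: "real \<times> real \<Rightarrow> real" where
  "paraboloid x = (fst x)\<^sup>2 + (snd x)\<^sup>2"

lemma dist_sq_eq: "(dist c x)\<^sup>2 = (fst c - fst x)\<^sup>2 + (snd c - snd x)\<^sup>2"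
  by (cases c, cases x) (simp add: dist_Pair_Pair dist_real_def)

lemma plane_at_of_circle:
  "plane_at (2 * \<epsilon> * fst c) (2 * \<epsilon> * snd c) (\<epsilon> * (r\<^sup>2 - paraboloid c)) x
     = \<epsilon> * (paraboloid x - (dist c x)\<^sup>2 + r\<^sup>2)"
  unfolding plane_at_def paraboloid_def dist_sq_eq by (simp add: power2_eq_square algebra_simps)

lemma circle_of_plane_at:
  "\<epsilon> * plane_at \<alpha> \<beta> \<gamma> x
     = paraboloid x - (dist (\<epsilon> * \<alpha> / 2, \<epsilon> * \<beta> / 2) x)\<^sup>2 + (\<epsilon> * \<gamma> + paraboloid (\<epsilon> * \<alpha> / 2, \<epsilon> * \<beta> / 2))"
  unfolding plane_at_def paraboloid_def dist_sq_eq by (simp add: power2_eq_square algebra_simps)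

lemma sign_less_iff_sign_sq_less:
  fixes \<epsilon> d r :: real
  assumes "\<epsilon> = 1 \<or> \<epsilon> = -1" "0 \<le> d" "0 \<le> r"
  shows "\<epsilon> * r < \<epsilon> * d \<longleftrightarrow> 0 < \<epsilon> * (d\<^sup>2 - r\<^sup>2)"
  using assms power_strict_mono[of r d 2] power_strict_mono[of d r 2]
    power_less_imp_less_base[of r 2 d] power_less_imp_less_base[of d 2 r] by auto

lemma on_common_circleI:
  assumes "\<forall>x\<in>X. (dist c x)\<^sup>2 = \<rho>" "x \<in> X" "y \<in> X" "x \<noteq> y"
  shows "on_common_circle X"
proof -
  have "\<rho> \<ge> 0" using assms(1,2) by (metis zero_le_power2)
  then have d: "\<forall>x\<in>X. dist c x = sqrt \<rho>" using assms(1) by (metis real_sqrt_unique zero_le_dist)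
  have "sqrt \<rho> \<noteq> 0" using d assms(2-4) by (metis dist_eq_0_iff)
  then show ?thesis unfolding on_common_circle_def using d \<open>\<rho> \<ge> 0\<close> by (metis real_sqrt_ge_zero less_eq_real_def)
qed

text \<open>With \<epsilon> = 1 this describes empty circles, with \<epsilon> = -1 full ones; negating the lift turns
  the upper convex hull into a lower one.\<close>
lemma circle_iff_plane_at:
  assumes \<epsilon>: "\<epsilon> = 1 \<or> \<epsilon> = -1" and "T \<noteq> {}"
  shows "(\<exists>c r. (\<forall>i\<in>T. dist c (x i) = r) \<and> (\<forall>m\<in>M. \<epsilon> * dist c (x m) > \<epsilon> * r)) \<longleftrightarrow>
    (\<exists>\<alpha> \<beta> \<gamma>. (\<forall>i\<in>T. plane_at \<alpha> \<beta> \<gamma> (x i) = \<epsilon> * paraboloid (x i)) \<and>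
      (\<forall>m\<in>M. plane_at \<alpha> \<beta> \<gamma> (x m) < \<epsilon> * paraboloid (x m)))"
proof
  assume "\<exists>c r. (\<forall>i\<in>T. dist c (x i) = r) \<and> (\<forall>m\<in>M. \<epsilon> * dist c (x m) > \<epsilon> * r)"
  then obtain c r where on: "\<forall>i\<in>T. dist c (x i) = r" and off: "\<forall>m\<in>M. \<epsilon> * dist c (x m) > \<epsilon> * r"
    by blast
  have "r \<ge> 0" using on \<open>T \<noteq> {}\<close> by force
  let ?plane = "plane_at (2 * \<epsilon> * fst c) (2 * \<epsilon> * snd c) (\<epsilon> * (r\<^sup>2 - paraboloid c))"
  have "\<forall>i\<in>T. ?plane (x i) = \<epsilon> * paraboloid (x i)" using on unfolding plane_at_of_circle by simp
  moreover have "\<forall>m\<in>M. ?plane (x m) < \<epsilon> * paraboloid (x m)"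
  proof
    fix m assume "m \<in> M"
    then have "0 < \<epsilon> * ((dist c (x m))\<^sup>2 - r\<^sup>2)"
      using off sign_less_iff_sign_sq_less[OF \<epsilon> zero_le_dist \<open>r \<ge> 0\<close>] by blast
    then show "?plane (x m) < \<epsilon> * paraboloid (x m)"
      unfolding plane_at_of_circle by (simp add: algebra_simps)
  qed
  ultimately show "\<exists>\<alpha> \<beta> \<gamma>. (\<forall>i\<in>T. plane_at \<alpha> \<beta> \<gamma> (x i) = \<epsilon> * paraboloid (x i)) \<and>
      (\<forall>m\<in>M. plane_at \<alpha> \<beta> \<gamma> (x m) < \<epsilon> * paraboloid (x m))" by blast
next
  assume "\<exists>\<alpha> \<beta> \<gamma>. (\<forall>i\<in>T. plane_at \<alpha> \<beta> \<gamma> (x i) = \<epsilon> * paraboloid (x i)) \<and>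
      (\<forall>m\<in>M. plane_at \<alpha> \<beta> \<gamma> (x m) < \<epsilon> * paraboloid (x m))"
  then obtain \<alpha> \<beta> \<gamma> where on: "\<forall>i\<in>T. plane_at \<alpha> \<beta> \<gamma> (x i) = \<epsilon> * paraboloid (x i)"
    and off: "\<forall>m\<in>M. plane_at \<alpha> \<beta> \<gamma> (x m) < \<epsilon> * paraboloid (x m)" by blast
  define c where "c = (\<epsilon> * \<alpha> / 2, \<epsilon> * \<beta> / 2)"
  define \<rho> where "\<rho> = \<epsilon> * \<gamma> + paraboloid c"
  have \<epsilon>\<epsilon>: "\<epsilon> * \<epsilon> = 1" using \<epsilon> by auto
  have power: "\<epsilon> * plane_at \<alpha> \<beta> \<gamma> y = paraboloid y - (dist c y)\<^sup>2 + \<rho>" for y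
    unfolding c_def \<rho>_def by (rule circle_of_plane_at)
  have on': "(dist c (x i))\<^sup>2 = \<rho>" if "i \<in> T" for i
    using power[of "x i"] on that \<epsilon>\<epsilon> by (simp add: mult.assoc[symmetric])
  then have "\<rho> \<ge> 0" using \<open>T \<noteq> {}\<close> by (metis ex_in_conv zero_le_power2)
  then have "\<forall>i\<in>T. dist c (x i) = sqrt \<rho>" using on' by (metis real_sqrt_unique zero_le_dist)
  moreover have "\<forall>m\<in>M. \<epsilon> * dist c (x m) > \<epsilon> * sqrt \<rho>"
  proof
    fix m assume "m \<in> M"
    have "(dist c (x m))\<^sup>2 - \<rho> = paraboloid (x m) - \<epsilon> * plane_at \<alpha> \<beta> \<gamma> (x m)"
      using power[of "x m"] by simp
    then have "\<epsilon> * ((dist c (x m))\<^sup>2 - \<rho>) = \<epsilon> * paraboloid (x m) - \<epsilon> * \<epsilon> * plane_at \<alpha> \<beta> \<gamma> (x m)"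
      by (simp add: right_diff_distrib mult.assoc)
    then have "\<epsilon> * ((dist c (x m))\<^sup>2 - (sqrt \<rho>)\<^sup>2) > 0"
      using off \<open>m \<in> M\<close> \<epsilon>\<epsilon> \<open>\<rho> \<ge> 0\<close> by simp
    then show "\<epsilon> * dist c (x m) > \<epsilon> * sqrt \<rho>"
      using sign_less_iff_sign_sq_less[OF \<epsilon> zero_le_dist real_sqrt_ge_zero[OF \<open>\<rho> \<ge> 0\<close>]] by blast
  qed
  ultimately show "\<exists>c r. (\<forall>i\<in>T. dist c (x i) = r) \<and> (\<forall>m\<in>M. \<epsilon> * dist c (x m) > \<epsilon> * r)" by blast
qed

lemma lifted_convex_position_paraboloid:
  assumes "convex_position p {0..<n} \<sigma>" and nc: "no_four_concyclic n p" and \<epsilon>: "\<epsilon> = 1 \<or> \<epsilon> = -1"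
  shows "lifted_convex_position p {0..<n} \<sigma> (\<lambda>i. \<epsilon> * paraboloid (p i))"
proof -
  interpret convex_position p "{0..<n}" \<sigma> by fact
  show ?thesis
  proof
    fix i j k l \<alpha> \<beta> \<gamma>
    assume N: "i \<in> {0..<n}" "j \<in> {0..<n}" "k \<in> {0..<n}" "l \<in> {0..<n}" and d: "distinct [i, j, k, l]"
      and on: "plane_at \<alpha> \<beta> \<gamma> (p i) = \<epsilon> * paraboloid (p i)" "plane_at \<alpha> \<beta> \<gamma> (p j) = \<epsilon> * paraboloid (p j)"
        "plane_at \<alpha> \<beta> \<gamma> (p k) = \<epsilon> * paraboloid (p k)" "plane_at \<alpha> \<beta> \<gamma> (p l) = \<epsilon> * paraboloid (p l)"
    define c where "c = (\<epsilon> * \<alpha> / 2, \<epsilon> * \<beta> / 2)"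
    have "\<epsilon> * \<epsilon> = 1" using \<epsilon> by auto
    then have "(dist c y)\<^sup>2 = \<epsilon> * \<gamma> + paraboloid c" if "plane_at \<alpha> \<beta> \<gamma> y = \<epsilon> * paraboloid y" for y
      using circle_of_plane_at[of \<epsilon> \<alpha> \<beta> \<gamma> y] that unfolding c_def by (simp add: mult.assoc[symmetric])
    then have "on_common_circle {p i, p j, p k, p l}"
      using points_distinct[of i j l] N d on by (intro on_common_circleI[of _ c _ "p i" "p j"]) auto
    then show False using nc N d unfolding no_four_concyclic_def by auto
  qed simp
qed

lemma circle_type_counts:
  assumes n: "4 \<le> n" and cp: "convex_position p {0..<n} \<sigma>" and nc: "no_four_concyclic n p"
    and \<epsilon>: "\<epsilon> = 1 \<or> \<epsilon> = -1"
    and C: "\<And>T. C T \<longleftrightarrow>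
      (\<exists>c r. (\<forall>i\<in>T. dist c (p i) = r) \<and> (\<forall>m\<in>{0..<n} - T. \<epsilon> * dist c (p m) > \<epsilon> * r))"
  shows "int (card {T \<in> triples n. C T \<and> neighboring n T}) - int (card {T \<in> triples n. C T \<and> disjoint_triple n T}) = 2
    \<and> card {T \<in> triples n. C T \<and> neighboring n T} + card {T \<in> triples n. C T \<and> disjoint_triple n T}
      + card {T \<in> triples n. C T \<and> intermediate n T} = n - 2"
proof -
  interpret lifted_convex_position p "{0..<n}" \<sigma> "\<lambda>i. \<epsilon> * paraboloid (p i)"
    using lifted_convex_position_paraboloid[OF cp nc \<epsilon>] .
  have "T \<in> triples n \<and> C T \<longleftrightarrow> lower_face {0..<n} T" for T
    using circle_iff_plane_at[OF \<epsilon>, of T p "{0..<n} - T"]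
    unfolding C lower_face_def triples_def by (cases "T = {}") auto
  then have faces: "{T \<in> triples n. C T \<and> P T} = {T. lower_face {0..<n} T \<and> P T}" for P
    by blast
  show ?thesis
  proof (rule triangle_type_counts[OF n])
    show "card {T \<in> triples n. C T} = n - 2"
      using faces[of "\<lambda>_. True"] card_lower_faces[of "{0..<n}"] n by simp
    show "card {T \<in> triples n. C T \<and> k \<in> T \<and> Suc k mod n \<in> T} = 1" if "k < n" for k
      using faces polygon_edge_in_unique_lower_face[of n k] that n by simp
  qed
qed

theorem mainTheorem1:
  fixes n :: nat and p :: "nat \<Rightarrow> real \<times> real"
  assumes "n \<ge> 4"
    and "convex_polygon n p"
    and "no_four_concyclic n p"
  defines "s\<^sub>p \<equiv> card {T \<in> triples n. full_circle n p T \<and> neighboring n T}"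
    and "t\<^sub>p \<equiv> card {T \<in> triples n. full_circle n p T \<and> disjoint_triple n T}"
    and "u\<^sub>p \<equiv> card {T \<in> triples n. full_circle n p T \<and> intermediate n T}"
    and "s\<^sub>m \<equiv> card {T \<in> triples n. empty_circle n p T \<and> neighboring n T}"
    and "t\<^sub>m \<equiv> card {T \<in> triples n. empty_circle n p T \<and> disjoint_triple n T}"
    and "u\<^sub>m \<equiv> card {T \<in> triples n. empty_circle n p T \<and> intermediate n T}"
  shows "int s\<^sub>p - int t\<^sub>p = 2 \<and> int s\<^sub>m - int t\<^sub>m = 2
       \<and> s\<^sub>p + t\<^sub>p + u\<^sub>p = n - 2 \<and> s\<^sub>m + t\<^sub>m + u\<^sub>m = n - 2"
proof -
  obtain \<sigma> where cp: "convex_position p {0..<n} \<sigma>"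
    using convex_polygon_convex_position[OF assms(2)] .
  have "full_circle n p T \<longleftrightarrow>
      (\<exists>c r. (\<forall>i\<in>T. dist c (p i) = r) \<and> (\<forall>m\<in>{0..<n} - T. -1 * dist c (p m) > -1 * r))" for T
    unfolding full_circle_def by simp
  from circle_type_counts[OF assms(1) cp assms(3), of "-1", OF _ this]
  have full: "int s\<^sub>p - int t\<^sub>p = 2 \<and> s\<^sub>p + t\<^sub>p + u\<^sub>p = n - 2"
    unfolding s\<^sub>p_def t\<^sub>p_def u\<^sub>p_def by simp
  have "empty_circle n p T \<longleftrightarrow>
      (\<exists>c r. (\<forall>i\<in>T. dist c (p i) = r) \<and> (\<forall>m\<in>{0..<n} - T. 1 * dist c (p m) > 1 * r))" for T
    unfolding empty_circle_def by simp
  from circle_type_counts[OF assms(1) cp assms(3), of 1, OF _ this]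
  have empty: "int s\<^sub>m - int t\<^sub>m = 2 \<and> s\<^sub>m + t\<^sub>m + u\<^sub>m = n - 2"
    unfolding s\<^sub>m_def t\<^sub>m_def u\<^sub>m_def by simp
  from full empty show ?thesis by blast
qed

end
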